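(* Let $\mathbf F\in\mathcal F_d$. The map $S_{\mathbf F}$ restricted to $\mathcal C^{OS}(\mathbf F)$ is injective; hence it is a bijection from $\mathcal C^{OS}(\mathbf F)$ onto $S_{\mathbf F}(\mathcal C^{OS}(\mathbf F))$.
   Context: $\mathcal F_d$: $d$-tuples $\mathbf F=(\mathbf F_1,\dots,\mathbf F_d)$ of continuous cdf's on $\mathbb R$ with $\mathbf F_{i-1}\ge\mathbf F_i$ for $2\le i\le d$. $\mathcal L^{OS}_d(\mathbf F)$: cdf's of random vectors $X$ with $X_1\le\dots\le X_d$ a.s. and $X_i$ with cdf $\mathbf F_i$. A copula is a cdf on $\mathbb R^d$ with uniform-on-$[0,1]$ marginals; for a cdf $F$ with continuous marginals $F_i$, its copula is $C_F(y)=F(F_1^{-1}(y_1),\dots,F_d^{-1}(y_d))$ with $J^{-1}(t)=\inf\{s:J(s)\ge t\}$. $\mathcal C^{OS}(\mathbf F)=\{C_F:F\in\mathcal L^{OS}_d(\mathbf F)\}$. For a copula $C$, $S_{\mathbf F}(C)$ is the copula of the exchangeable vector $X_\Pi=(X_{\Pi(1)},\dots,X_{\Pi(d)})$, where $X$ has one-dimensional marginal cdf's $\mathbf F$ and copula $C$, and $\Pi$ is independent of $X$ and uniform on the permutations of $\{1,\dots,d\}$ (its marginals are all $G=\frac1d\sum\mathbf F_i$, which is continuous, so this copula is unique). *)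

theory Defs
  imports "HOL-Probability.Probability"
begin

text \<open>Random vectors in R^d are represented by their laws: probability measures on
  the product space with coordinates indexed by 0..d-1 (the paper's 1..d).\<close>

abbreviation Rd :: "nat \<Rightarrow> (nat \<Rightarrow> real) measure" where
  "Rd d \<equiv> PiM {..<d} (\<lambda>_. borel)"

definition is_cdf :: "(real \<Rightarrow> real) \<Rightarrow> bool" where
  "is_cdf J \<longleftrightarrow> (\<exists>M. real_distribution M \<and> cdf M = J)"

definition Fclass :: "nat \<Rightarrow> (nat \<Rightarrow> real \<Rightarrow> real) \<Rightarrow> bool" where
  "Fclass d F \<longleftrightarrow>
     (\<forall>i<d. is_cdf (F i) \<and> continuous_on UNIV (F i)) \<and>
     (\<forall>i. 0 < i \<and> i < d \<longrightarrow> (\<forall>x. F (i - 1) x \<ge> F i x))"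

definition is_law :: "nat \<Rightarrow> (nat \<Rightarrow> real) measure \<Rightarrow> bool" where
  "is_law d P \<longleftrightarrow> prob_space P \<and> sets P = sets (Rd d)"

definition ext_cdf :: "nat \<Rightarrow> (nat \<Rightarrow> real) measure \<Rightarrow> (nat \<Rightarrow> ereal) \<Rightarrow> real" where
  "ext_cdf d P x = measure P {y \<in> space P. \<forall>i<d. ereal (y i) \<le> x i}"

definition marg_cdf :: "(nat \<Rightarrow> real) measure \<Rightarrow> nat \<Rightarrow> real \<Rightarrow> real" where
  "marg_cdf P i t = measure P {y \<in> space P. y i \<le> t}"

text \<open>Generalized inverse J^{-1}(t) = inf {s. J s >= t}, taken in the extended reals
  (inf of the empty set is +oo, of an unbounded-below set -oo).\<close>
definition gen_inv :: "(real \<Rightarrow> real) \<Rightarrow> real \<Rightarrow> ereal" where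
  "gen_inv J t = Inf (ereal ` {s. J s \<ge> t})"

definition copula_of :: "nat \<Rightarrow> (nat \<Rightarrow> real) measure \<Rightarrow> (nat \<Rightarrow> real) \<Rightarrow> real" where
  "copula_of d P y = ext_cdf d P (\<lambda>i. gen_inv (marg_cdf P i) (y i))"

definition LOS :: "nat \<Rightarrow> (nat \<Rightarrow> real \<Rightarrow> real) \<Rightarrow> (nat \<Rightarrow> real) measure set" where
  "LOS d F = {P. is_law d P \<and>
                 (AE y in P. \<forall>i. 0 < i \<and> i < d \<longrightarrow> y (i - 1) \<le> y i) \<and>
                 (\<forall>i<d. marg_cdf P i = F i)}"

definition COS :: "nat \<Rightarrow> (nat \<Rightarrow> real \<Rightarrow> real) \<Rightarrow> ((nat \<Rightarrow> real) \<Rightarrow> real) set" where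
  "COS d F = copula_of d ` LOS d F"

definition perm_mix :: "nat \<Rightarrow> (nat \<Rightarrow> real) measure \<Rightarrow> (nat \<Rightarrow> real) measure" where
  "perm_mix d P =
     distr (measure_pmf (pmf_of_set {\<pi>. \<pi> permutes {..<d}}) \<Otimes>\<^sub>M P) (Rd d)
       (\<lambda>(\<pi>, x). restrict (\<lambda>i. x (\<pi> i)) {..<d})"

text \<open>S_F(C): the copula of X_Pi, where X has marginal cdfs F and copula C
  (such a law is unique when the marginals are continuous).\<close>
definition S_F :: "nat \<Rightarrow> (nat \<Rightarrow> real \<Rightarrow> real) \<Rightarrow> ((nat \<Rightarrow> real) \<Rightarrow> real) \<Rightarrow> ((nat \<Rightarrow> real) \<Rightarrow> real)" where
  "S_F d F C = copula_of d (perm_mix d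
     (SOME P. is_law d P \<and> (\<forall>i<d. marg_cdf P i = F i) \<and> copula_of d P = C))"

end

theory Submission
  imports Defs
begin

text \<open>A law P in L^OS_d(F) is determined by its marginals and its copula (Sklar), so it
  suffices to recover P from its symmetrization perm_mix d P. For an a.s. sorted vector X,
  the event that X_k \<le> a_k for all k coincides with the event that, for every k, at least
  k+1 coordinates of X are \<le> a_k; the latter event is invariant under permuting
  coordinates, hence has the same probability under P and under perm_mix d P. Thus the
  cdf of P, and so P itself, is a function of perm_mix d P.\<close>

lemma space_law: "is_law d P \<Longrightarrow> space P = PiE {..<d} (\<lambda>_. UNIV)"
  unfolding is_law_def by (auto dest!: sets_eq_imp_space_eq simp: space_PiM)

lemma measurable_law_component:
  assumes "is_law d P"
  shows "(\<lambda>y. y i) \<in> borel_measurable P"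
proof (cases "i < d")
  case True
  have "(\<lambda>y. y i) \<in> borel_measurable (Rd d)"
    by (rule measurable_component_singleton) (use True in simp)
  then show ?thesis using assms unfolding is_law_def by (simp cong: measurable_cong_sets)
next
  case False
  then have "\<forall>y\<in>space P. y i = undefined"
    by (simp add: space_law[OF assms] PiE_def extensional_def)
  then show ?thesis by (subst measurable_cong[where g="\<lambda>y. undefined"]) auto
qed

lemma sets_Rd_eq_sigma_lower_orthants:
  "sets (Rd d) = sigma_sets (PiE {..<d} (\<lambda>_. UNIV))
     {{y \<in> PiE {..<d} (\<lambda>_. UNIV). \<forall>i<d. y i \<le> x i} | x. True}"
proof -
  have cover: "\<exists>S\<subseteq>range atMost. countable S \<and> (UNIV::real set) = \<Union>S"
  proof (intro exI[of _ "range (\<lambda>n::nat. {..real n})"] conjI)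
    show "UNIV = (\<Union>n::nat. {..real n})"
      by (auto intro: real_arch_simple)
  qed auto
  have "sets (Rd d) = sets (PiM {..<d} (\<lambda>_. sigma UNIV (range (\<lambda>a. {..a::real}))))"
    by (rule sets_PiM_cong) (simp_all add: borel_eq_atMost[symmetric])
  also have "\<dots> = sets (sigma (PiE {..<d} (\<lambda>_. UNIV))
      {{f\<in>PiE {..<d} (\<lambda>_. UNIV). \<forall>i\<in>j. f i \<in> A i} | A j. j \<in> {{..<d}} \<and> A \<in> Pi j (\<lambda>_. range (\<lambda>a. {..a::real}))})"
    by (rule sets_PiM_sigma[where \<Omega>="\<lambda>_. UNIV" and E="\<lambda>_. range atMost" and J="{{..<d}}"])
      (rule cover | simp)+
  also have "{{f\<in>PiE {..<d} (\<lambda>_. UNIV). \<forall>i\<in>j. f i \<in> A i} | A j. j \<in> {{..<d}} \<and> A \<in> Pi j (\<lambda>_. range (\<lambda>a. {..a::real}))}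
     = {{f \<in> PiE {..<d} (\<lambda>_. UNIV). \<forall>i<d. f i \<le> x i} | x. True}" (is "_ = ?orthants")
  proof safe
    fix A :: "nat \<Rightarrow> real set" assume A: "A \<in> Pi {..<d} (\<lambda>_. range atMost)"
    define x where "x i = (SOME a. A i = {..a})" for i
    have "\<forall>i<d. A i = {..x i}" using A unfolding x_def Pi_def by (auto intro: someI)
    then show "\<exists>x. {f \<in> PiE {..<d} (\<lambda>_. UNIV). \<forall>i\<in>{..<d}. f i \<in> A i} =
          {f \<in> PiE {..<d} (\<lambda>_. UNIV). \<forall>i<d. f i \<le> x i} \<and> True"
      by (intro exI[of _ x]) auto
  next
    fix x :: "nat \<Rightarrow> real"
    show "\<exists>A j. {f \<in> PiE {..<d} (\<lambda>_. UNIV). \<forall>i<d. f i \<le> x i} =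
          {f \<in> PiE {..<d} (\<lambda>_. UNIV). \<forall>i\<in>j. f i \<in> A i} \<and> j \<in> {{..<d}} \<and> A \<in> Pi j (\<lambda>_. range atMost)"
      by (intro exI[of _ "\<lambda>i. {..x i}"] exI[of _ "{..<d}"]) auto
  qed
  also have "sets (sigma (PiE {..<d} (\<lambda>_. UNIV)) ?orthants) = sigma_sets (PiE {..<d} (\<lambda>_. UNIV)) ?orthants"
    by (rule sets_measure_of) blast
  finally show ?thesis .
qed

lemma UN_lower_orthants_nat:
  fixes d :: nat
  shows "(\<Union>n::nat. {y \<in> PiE {..<d} (\<lambda>_. UNIV). \<forall>i<d. y i \<le> real n}) = PiE {..<d} (\<lambda>_. UNIV)"
proof (intro antisym subsetI)
  fix y :: "nat \<Rightarrow> real" assume y: "y \<in> PiE {..<d} (\<lambda>_. UNIV)"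
  obtain n :: nat where n: "Max (insert 0 (y ` {..<d})) \<le> real n"
    using real_arch_simple by blast
  have "y i \<le> real n" if "i < d" for i
    using Max_ge[of "insert 0 (y ` {..<d})" "y i"] that n by simp
  then show "y \<in> (\<Union>n::nat. {y \<in> PiE {..<d} (\<lambda>_. UNIV). \<forall>i<d. y i \<le> real n})"
    using y by blast
qed blast

lemma law_eqI_cdf:
  assumes P: "is_law d P" and Q: "is_law d Q"
    and cdf: "\<And>x. measure P {y\<in>space P. \<forall>i<d. y i \<le> x i} = measure Q {y\<in>space Q. \<forall>i<d. y i \<le> x i}"
  shows "P = Q"
proof -
  interpret P: prob_space P using P unfolding is_law_def by simp
  interpret Q: prob_space Q using Q unfolding is_law_def by simp
  define \<Omega> where "\<Omega> = (PiE {..<d} (\<lambda>_. UNIV) :: (nat \<Rightarrow> real) set)"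
  define orthant where "orthant x = {y \<in> \<Omega>. \<forall>i<d. y i \<le> x i}" for x
  have space: "space P = \<Omega>" "space Q = \<Omega>"
    using space_law[OF P] space_law[OF Q] by (simp_all add: \<Omega>_def)
  have "Int_stable (range orthant)"
  proof (rule Int_stableI)
    fix a b assume "a \<in> range orthant" "b \<in> range orthant"
    then obtain x z where "a = orthant x" "b = orthant z" by blast
    then have "a \<inter> b = orthant (\<lambda>i. min (x i) (z i))" by (auto simp: orthant_def)
    then show "a \<inter> b \<in> range orthant" by blast
  qed
  moreover have "range orthant \<subseteq> Pow \<Omega>" by (auto simp: orthant_def)
  moreover have "emeasure P X = emeasure Q X" if "X \<in> range orthant" for X
  proof -
    from that obtain x where "X = orthant x" by blast
    then show ?thesis
      using cdf[of x] by (simp add: orthant_def space P.emeasure_eq_measure Q.emeasure_eq_measure)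
  qed
  moreover have "sets P = sigma_sets \<Omega> (range orthant)" "sets Q = sigma_sets \<Omega> (range orthant)"
  proof -
    have "range orthant = {{y \<in> \<Omega>. \<forall>i<d. y i \<le> x i} | x. True}"
      unfolding orthant_def by blast
    then show "sets P = sigma_sets \<Omega> (range orthant)" "sets Q = sigma_sets \<Omega> (range orthant)"
      using P Q sets_Rd_eq_sigma_lower_orthants[of d] by (simp_all add: is_law_def \<Omega>_def)
  qed
  moreover have "range (\<lambda>n::nat. orthant (\<lambda>_. real n)) \<subseteq> range orthant" by blast
  moreover have "(\<Union>n::nat. orthant (\<lambda>_. real n)) = \<Omega>"
    unfolding orthant_def \<Omega>_def by (rule UN_lower_orthants_nat)
  moreover have "emeasure P (orthant (\<lambda>_. real n)) \<noteq> \<infinity>" for n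
    by (simp add: P.emeasure_eq_measure)
  ultimately show ?thesis
    by (rule measure_eqI_generator_eq)
qed

lemma marg_cdf_flat_null:
  assumes P: "is_law d P" and "s \<le> x" and flat: "marg_cdf P i x \<le> marg_cdf P i s"
  shows "{y\<in>space P. s < y i \<and> y i \<le> x} \<in> null_sets P"
proof -
  interpret prob_space P using P unfolding is_law_def by simp
  have [measurable]: "(\<lambda>y. y i) \<in> borel_measurable P"
    using P by (rule measurable_law_component)
  have sets: "{y\<in>space P. y i \<le> x} \<in> sets P" "{y\<in>space P. y i \<le> s} \<in> sets P"
    by measurable
  have eq: "{y\<in>space P. s < y i \<and> y i \<le> x} = {y\<in>space P. y i \<le> x} - {y\<in>space P. y i \<le> s}"
    by auto
  have "measure P ({y\<in>space P. y i \<le> x} - {y\<in>space P. y i \<le> s}) =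
      measure P {y\<in>space P. y i \<le> x} - measure P {y\<in>space P. y i \<le> s}"
    by (rule finite_measure_Diff[OF sets]) (use \<open>s \<le> x\<close> in auto)
  moreover have "measure P {y\<in>space P. y i \<le> x} \<le> measure P {y\<in>space P. y i \<le> s}"
    using flat unfolding marg_cdf_def .
  ultimately have "measure P ({y\<in>space P. y i \<le> x} - {y\<in>space P. y i \<le> s}) = 0"
    using measure_nonneg[of P "{y\<in>space P. y i \<le> x} - {y\<in>space P. y i \<le> s}"] by linarith
  then show ?thesis
    unfolding eq using sets by (simp add: emeasure_eq_measure null_sets_def)
qed

text \<open>A.s. nothing lies in a gap where the marginal cdf is flat, so
  X_i \<le> x and X_i \<le> F_i^{-1}(F_i(x)) agree almost surely, whatever F_i is.\<close>
lemma AE_le_gen_inv_marg_cdf: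
  assumes P: "is_law d P"
  shows "AE y in P. y i \<le> x \<longrightarrow> ereal (y i) \<le> gen_inv (marg_cdf P i) (marg_cdf P i x)"
proof -
  define a where "a = gen_inv (marg_cdf P i) (marg_cdf P i x)"
  have gap: "AE y in P. \<not> (q < y i \<and> y i \<le> x)" if "a < ereal q" for q
  proof (cases "q \<le> x")
    case True
    from \<open>a < ereal q\<close> obtain s where s: "marg_cdf P i x \<le> marg_cdf P i s" "s < q"
      unfolding a_def gen_inv_def Inf_less_iff by auto
    have "{y\<in>space P. s < y i \<and> y i \<le> x} \<in> null_sets P"
      using marg_cdf_flat_null[OF P _ s(1)] s True by simp
    then show ?thesis by (rule AE_I') (use s in auto)
  qed (auto intro: AE_I2)
  have "AE y in P. \<forall>q\<in>range real_of_rat. a < ereal q \<longrightarrow> \<not> (q < y i \<and> y i \<le> x)"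
    using gap by (subst AE_ball_countable) auto
  then have "AE y in P. y i \<le> x \<longrightarrow> ereal (y i) \<le> a"
  proof (rule AE_mp, intro AE_I2 impI)
    fix y assume gaps: "\<forall>q\<in>range real_of_rat. a < ereal q \<longrightarrow> \<not> (q < y i \<and> y i \<le> x)"
      and "y i \<le> x"
    show "ereal (y i) \<le> a"
    proof (rule ccontr)
      assume "\<not> ereal (y i) \<le> a"
      then obtain r where "a < ereal (real_of_rat r)" "real_of_rat r < y i"
        using ereal_dense3[of a "ereal (y i)"] by (auto simp: not_le)
      then show False using gaps \<open>y i \<le> x\<close> by auto
    qed
  qed
  then show ?thesis by (simp add: a_def)
qed

lemma cdf_eq_copula_of_marg_cdf:
  assumes P: "is_law d P"
  shows "measure P {y\<in>space P. \<forall>i<d. y i \<le> x i} = copula_of d P (\<lambda>i. marg_cdf P i (x i))"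
proof -
  let ?a = "\<lambda>i. gen_inv (marg_cdf P i) (marg_cdf P i (x i))"
  have a_le: "?a i \<le> ereal (x i)" for i
    unfolding gen_inv_def by (rule Inf_lower) simp
  have le_x: "ereal (y i) \<le> ?a i \<Longrightarrow> y i \<le> x i" for y :: "nat \<Rightarrow> real" and i
    using a_le[of i] by (metis ereal_less_eq(3) order_trans)
  have "AE y in P. \<forall>i\<in>{..<d}. y i \<le> x i \<longrightarrow> ereal (y i) \<le> ?a i"
    by (intro AE_finite_allI AE_le_gen_inv_marg_cdf[OF P]) simp
  then have AE: "AE y in P. (\<forall>i<d. y i \<le> x i) \<longleftrightarrow> (\<forall>i<d. ereal (y i) \<le> ?a i)"
  proof (rule AE_mp, intro AE_I2 impI)
    fix y assume le_a: "\<forall>i\<in>{..<d}. y i \<le> x i \<longrightarrow> ereal (y i) \<le> ?a i"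
    show "(\<forall>i<d. y i \<le> x i) \<longleftrightarrow> (\<forall>i<d. ereal (y i) \<le> ?a i)"
    proof (intro iffI allI impI)
      fix i assume "\<forall>i<d. y i \<le> x i" and "i < d"
      then show "ereal (y i) \<le> ?a i" using le_a by simp
    next
      fix i assume "\<forall>i<d. ereal (y i) \<le> ?a i" and "i < d"
      then show "y i \<le> x i" using le_x[of y i] by simp
    qed
  qed
  have [measurable]: "(\<lambda>y. y i) \<in> borel_measurable P" for i
    using P by (rule measurable_law_component)
  have "measure P {y\<in>space P. \<forall>i<d. y i \<le> x i} =
      measure P {y\<in>space P. \<forall>i<d. ereal (y i) \<le> ?a i}"
    by (rule measure_eq_AE) (use AE in auto; measurable)+
  then show ?thesis unfolding copula_of_def ext_cdf_def by simp
qed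

lemma law_eqI_marg_cdf_copula:
  assumes P: "is_law d P" and Q: "is_law d Q"
    and marg: "\<And>i. i < d \<Longrightarrow> marg_cdf P i = marg_cdf Q i"
    and cop: "copula_of d P = copula_of d Q"
  shows "P = Q"
proof (rule law_eqI_cdf[OF P Q])
  fix x :: "nat \<Rightarrow> real"
  have "measure P {y\<in>space P. \<forall>i<d. y i \<le> x i} = copula_of d Q (\<lambda>i. marg_cdf P i (x i))"
    using cdf_eq_copula_of_marg_cdf[OF P] cop by simp
  also have "\<dots> = copula_of d Q (\<lambda>i. marg_cdf Q i (x i))"
    using marg unfolding copula_of_def ext_cdf_def by simp
  finally show "measure P {y\<in>space P. \<forall>i<d. y i \<le> x i} = measure Q {y\<in>space Q. \<forall>i<d. y i \<le> x i}"
    using cdf_eq_copula_of_marg_cdf[OF Q] by simp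
qed

abbreviation perms :: "nat \<Rightarrow> (nat \<Rightarrow> nat) set" where
  "perms d \<equiv> {\<pi>. \<pi> permutes {..<d}}"

lemma finite_perms: "finite (perms d)"
  by (rule finite_permutations) simp

lemma perms_nonempty: "perms d \<noteq> {}"
  using permutes_id by blast

lemma set_pmf_of_perms: "set_pmf (pmf_of_set (perms d)) = perms d"
  using perms_nonempty finite_perms by (rule set_pmf_of_set)

definition permute_vec :: "nat \<Rightarrow> (nat \<Rightarrow> nat) \<Rightarrow> (nat \<Rightarrow> real) \<Rightarrow> (nat \<Rightarrow> real)" where
  "permute_vec d \<pi> x = restrict (\<lambda>i. x (\<pi> i)) {..<d}"

lemma perm_mix_eq_distr:
  "perm_mix d P = distr (measure_pmf (pmf_of_set (perms d)) \<Otimes>\<^sub>M P) (Rd d) (case_prod (permute_vec d))"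
  unfolding perm_mix_def permute_vec_def by (simp add: case_prod_beta')

text \<open>measure_pmf carries the discrete sigma-algebra on the uncountable type nat \<Rightarrow> nat;
  only the countably many restrictions to {..<d} matter, hence measurable_compose_countable'.\<close>
lemma measurable_permute_vec:
  assumes P: "is_law d P"
  shows "case_prod (permute_vec d) \<in> measurable (measure_pmf p \<Otimes>\<^sub>M P) (Rd d)"
proof -
  let ?I = "PiE {..<d} (\<lambda>_. UNIV::nat set)"
  have [measurable]: "(\<lambda>y. y i) \<in> borel_measurable P" for i
    using P by (rule measurable_law_component)
  have "(\<lambda>z. permute_vec d \<rho> (snd z)) \<in> measurable (measure_pmf p \<Otimes>\<^sub>M P) (Rd d)" for \<rho>
    unfolding permute_vec_def by measurable
  moreover have "(\<lambda>z. restrict (fst z) {..<d}) \<in> measurable (measure_pmf p \<Otimes>\<^sub>M P) (count_space ?I)"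
    by (rule measurable_compose[OF measurable_fst]) (auto simp: PiE_iff extensional_def)
  moreover have "countable ?I" by (rule countable_PiE) auto
  ultimately have "(\<lambda>z. permute_vec d (restrict (fst z) {..<d}) (snd z))
      \<in> measurable (measure_pmf p \<Otimes>\<^sub>M P) (Rd d)"
    by (rule measurable_compose_countable')
  moreover have "(\<lambda>z. permute_vec d (restrict (fst z) {..<d}) (snd z)) = case_prod (permute_vec d)"
    by (auto simp: fun_eq_iff permute_vec_def)
  ultimately show ?thesis by simp
qed

lemma is_law_perm_mix:
  assumes P: "is_law d P"
  shows "is_law d (perm_mix d P)"
proof -
  have "prob_space (measure_pmf (pmf_of_set (perms d)) \<Otimes>\<^sub>M P)"
    using P by (intro prob_space_pair) (auto simp: is_law_def prob_space_measure_pmf)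
  then show ?thesis
    unfolding is_law_def perm_mix_eq_distr
    by (auto intro: prob_space.prob_space_distr measurable_permute_vec[OF P])
qed

lemma emeasure_perm_mix:
  assumes P: "is_law d P" and E: "E \<in> sets (Rd d)"
  shows "emeasure (perm_mix d P) E =
    (\<Sum>\<pi>\<in>perms d. emeasure P {x\<in>space P. permute_vec d \<pi> x \<in> E} * pmf (pmf_of_set (perms d)) \<pi>)"
proof -
  interpret P: prob_space P using P unfolding is_law_def by simp
  let ?p = "pmf_of_set (perms d)"
  let ?M = "measure_pmf ?p \<Otimes>\<^sub>M P"
  have f: "case_prod (permute_vec d) \<in> measurable ?M (Rd d)" by (rule measurable_permute_vec[OF P])
  have "emeasure (perm_mix d P) E = emeasure ?M (case_prod (permute_vec d) -` E \<inter> space ?M)"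
    unfolding perm_mix_eq_distr by (rule emeasure_distr[OF f E])
  also have "\<dots> = (\<integral>\<^sup>+\<pi>. emeasure P (Pair \<pi> -` (case_prod (permute_vec d) -` E \<inter> space ?M)) \<partial>measure_pmf ?p)"
    using measurable_sets[OF f E] by (rule P.emeasure_pair_measure_alt)
  also have "\<dots> = (\<integral>\<^sup>+\<pi>. emeasure P {x\<in>space P. permute_vec d \<pi> x \<in> E} \<partial>measure_pmf ?p)"
    by (intro nn_integral_cong arg_cong[where f="emeasure P"]) (auto simp: space_pair_measure)
  also have "\<dots> = (\<Sum>\<pi>\<in>perms d. emeasure P {x\<in>space P. permute_vec d \<pi> x \<in> E} * pmf ?p \<pi>)"
    using nn_integral_measure_pmf_finite[of ?p] by (simp add: set_pmf_of_perms finite_perms)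
  finally show ?thesis .
qed

lemma emeasure_perm_mix_invariant:
  assumes P: "is_law d P" and E: "E \<in> sets (Rd d)"
    and invariant: "\<And>\<pi> y. \<pi> permutes {..<d} \<Longrightarrow> y \<in> space (Rd d) \<Longrightarrow> permute_vec d \<pi> y \<in> E \<longleftrightarrow> y \<in> E"
  shows "emeasure (perm_mix d P) E = emeasure P E"
proof -
  let ?p = "pmf_of_set (perms d)"
  have "{x\<in>space P. permute_vec d \<pi> x \<in> E} = E" if "\<pi> \<in> perms d" for \<pi>
    using invariant[of \<pi>] that sets.sets_into_space[OF E] space_law[OF P] by (auto simp: space_PiM)
  then have "emeasure (perm_mix d P) E = (\<Sum>\<pi>\<in>perms d. emeasure P E * ennreal (pmf ?p \<pi>))"
    by (simp add: emeasure_perm_mix[OF P E])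
  also have "\<dots> = emeasure P E * ennreal (\<Sum>\<pi>\<in>perms d. pmf ?p \<pi>)"
    by (simp add: sum_distrib_left[symmetric])
  also have "(\<Sum>\<pi>\<in>perms d. pmf ?p \<pi>) = 1"
    by (rule sum_pmf_eq_1) (simp_all add: finite_perms set_pmf_of_perms)
  finally show ?thesis by simp
qed

lemma marg_cdf_perm_mix_cong:
  assumes P: "is_law d P" and Q: "is_law d Q"
    and marg: "\<And>i. i < d \<Longrightarrow> marg_cdf P i = marg_cdf Q i" and "i < d"
  shows "marg_cdf (perm_mix d P) i = marg_cdf (perm_mix d Q) i"
proof
  fix t
  interpret P: prob_space P using P unfolding is_law_def by simp
  interpret Q: prob_space Q using Q unfolding is_law_def by simp
  define E where "E = {y\<in>space (Rd d). y i \<le> t}"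
  have E: "E \<in> sets (Rd d)" unfolding E_def by measurable (simp add: \<open>i < d\<close>)
  have "emeasure P {x\<in>space P. permute_vec d \<pi> x \<in> E} = emeasure Q {x\<in>space Q. permute_vec d \<pi> x \<in> E}"
    if "\<pi> \<in> perms d" for \<pi>
  proof -
    have "\<pi> i < d" using that \<open>i < d\<close> permutes_in_image[of \<pi> "{..<d}" i] by simp
    then have "marg_cdf P (\<pi> i) t = marg_cdf Q (\<pi> i) t" using marg by simp
    moreover have "{x\<in>space R. permute_vec d \<pi> x \<in> E} = {x\<in>space R. x (\<pi> i) \<le> t}" for R
      unfolding E_def using \<open>i < d\<close> by (auto simp: space_PiM permute_vec_def)
    ultimately show ?thesis
      unfolding marg_cdf_def by (simp add: P.emeasure_eq_measure Q.emeasure_eq_measure)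
  qed
  then have "emeasure (perm_mix d P) E = emeasure (perm_mix d Q) E"
    by (simp add: emeasure_perm_mix[OF P E] emeasure_perm_mix[OF Q E])
  moreover have "{y\<in>space (perm_mix d R). y i \<le> t} = E" for R
    unfolding E_def perm_mix_def by simp
  ultimately show "marg_cdf (perm_mix d P) i t = marg_cdf (perm_mix d Q) i t"
    unfolding marg_cdf_def by (simp add: measure_def)
qed

text \<open>The event that the (k+1)-th smallest coordinate is at most a k, for every k < d.\<close>
definition order_stat_le :: "nat \<Rightarrow> (nat \<Rightarrow> real) \<Rightarrow> (nat \<Rightarrow> real) set" where
  "order_stat_le d a = {y\<in>space (Rd d). \<forall>k<d. real (Suc k) \<le> (\<Sum>i<d. of_bool (y i \<le> a k))}"

lemma order_stat_le_sets: "order_stat_le d a \<in> sets (Rd d)"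
  unfolding order_stat_le_def by measurable

lemma permute_vec_in_order_stat_le_iff:
  assumes "\<pi> permutes {..<d}" and "y \<in> space (Rd d)"
  shows "permute_vec d \<pi> y \<in> order_stat_le d a \<longleftrightarrow> y \<in> order_stat_le d a"
proof -
  have "(\<Sum>i<d. of_bool (permute_vec d \<pi> y i \<le> c)) = (\<Sum>i<d. (of_bool (y i \<le> c) :: real))" for c
    using sum.permute[OF assms(1), of "\<lambda>i. of_bool (y i \<le> c) :: real"]
    by (simp add: permute_vec_def del: sum_of_bool_eq)
  moreover have "permute_vec d \<pi> y \<in> space (Rd d)" by (simp add: permute_vec_def space_PiM)
  ultimately show ?thesis using assms(2) unfolding order_stat_le_def by simp
qed

abbreviation sorted_vec :: "nat \<Rightarrow> (nat \<Rightarrow> 'a::ord) \<Rightarrow> bool" where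
  "sorted_vec d y \<equiv> \<forall>i. 0 < i \<and> i < d \<longrightarrow> y (i - 1) \<le> y i"

lemma sorted_vec_mono:
  fixes y :: "nat \<Rightarrow> 'a::preorder"
  assumes adjacent: "sorted_vec d y" and "i \<le> j" "j < d"
  shows "y i \<le> y j"
proof -
  have "j < d \<longrightarrow> y i \<le> y j" using \<open>i \<le> j\<close>
  proof (induction j rule: dec_induct)
    case (step n)
    show ?case
    proof
      assume "Suc n < d"
      then have "y i \<le> y n" using step.IH by simp
      moreover have "y n \<le> y (Suc n)" using adjacent \<open>Suc n < d\<close> by fastforce
      ultimately show "y i \<le> y (Suc n)" by (rule order_trans)
    qed
  qed simp
  with \<open>j < d\<close> show ?thesis by simp
qed

lemma sorted_vec_le_iff_card_le:
  fixes y :: "nat \<Rightarrow> real"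
  assumes sorted: "sorted_vec d y" and "k < d"
  shows "y k \<le> c \<longleftrightarrow> Suc k \<le> card {i\<in>{..<d}. y i \<le> c}"
proof
  assume "y k \<le> c"
  have "{..k} \<subseteq> {i\<in>{..<d}. y i \<le> c}"
  proof
    fix i assume "i \<in> {..k}"
    then have "y i \<le> y k" using sorted_vec_mono[OF sorted _ \<open>k < d\<close>] by simp
    then show "i \<in> {i\<in>{..<d}. y i \<le> c}" using \<open>i \<in> {..k}\<close> \<open>k < d\<close> \<open>y k \<le> c\<close> by simp
  qed
  from card_mono[OF _ this] show "Suc k \<le> card {i\<in>{..<d}. y i \<le> c}" by simp
next
  assume card: "Suc k \<le> card {i\<in>{..<d}. y i \<le> c}"
  show "y k \<le> c"
  proof (rule ccontr)
    assume "\<not> y k \<le> c"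
    have "{i\<in>{..<d}. y i \<le> c} \<subseteq> {..<k}"
    proof
      fix i assume i: "i \<in> {i\<in>{..<d}. y i \<le> c}"
      show "i \<in> {..<k}"
      proof (rule ccontr)
        assume "i \<notin> {..<k}"
        then have "y k \<le> y i" using sorted_vec_mono[OF sorted, of k i] i by simp
        then show False using i \<open>\<not> y k \<le> c\<close> by simp
      qed
    qed
    from card_mono[OF _ this] have "card {i\<in>{..<d}. y i \<le> c} \<le> k" by simp
    with card show False by simp
  qed
qed

lemma sorted_vec_in_order_stat_le_iff:
  assumes sorted: "sorted_vec d y" and "y \<in> space (Rd d)"
  shows "y \<in> order_stat_le d a \<longleftrightarrow> (\<forall>k<d. y k \<le> a k)"
proof -
  have "y \<in> order_stat_le d a \<longleftrightarrow> (\<forall>k<d. Suc k \<le> card {i\<in>{..<d}. y i \<le> a k})"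
    using assms(2) by (simp add: order_stat_le_def Collect_conj_eq lessThan_def flip: of_nat_Suc)
  then show ?thesis by (simp add: sorted_vec_le_iff_card_le[OF sorted])
qed

lemma measure_orthant_eq_order_stat_le:
  assumes R: "is_law d R" and sorted: "AE y in R. sorted_vec d y"
  shows "measure R {y\<in>space R. \<forall>i<d. y i \<le> a i} = measure R (order_stat_le d a)"
proof (rule measure_eq_AE)
  show "AE y in R. y \<in> {y\<in>space R. \<forall>i<d. y i \<le> a i} \<longleftrightarrow> y \<in> order_stat_le d a"
    using sorted AE_space
    by eventually_elim (simp add: sorted_vec_in_order_stat_le_iff space_law[OF R] space_PiM)
  have [measurable]: "(\<lambda>y. y i) \<in> borel_measurable R" for i
    using R by (rule measurable_law_component)
  show "{y\<in>space R. \<forall>i<d. y i \<le> a i} \<in> sets R" by measurable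
  show "order_stat_le d a \<in> sets R" using R order_stat_le_sets by (simp add: is_law_def)
qed

lemma measure_perm_mix_order_stat_le:
  assumes "is_law d P"
  shows "measure (perm_mix d P) (order_stat_le d a) = measure P (order_stat_le d a)"
  using emeasure_perm_mix_invariant[OF assms order_stat_le_sets permute_vec_in_order_stat_le_iff]
  by (simp add: measure_def)

lemma law_eq_if_perm_mix_eq:
  assumes P: "is_law d P" "AE y in P. sorted_vec d y"
    and Q: "is_law d Q" "AE y in Q. sorted_vec d y"
    and eq: "perm_mix d P = perm_mix d Q"
  shows "P = Q"
proof (rule law_eqI_cdf[OF P(1) Q(1)])
  fix a
  show "measure P {y\<in>space P. \<forall>i<d. y i \<le> a i} = measure Q {y\<in>space Q. \<forall>i<d. y i \<le> a i}"
    using measure_orthant_eq_order_stat_le[OF P] measure_orthant_eq_order_stat_le[OF Q]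
      measure_perm_mix_order_stat_le[OF P(1)] measure_perm_mix_order_stat_le[OF Q(1)] eq
    by simp
qed

lemma S_F_copula_of:
  assumes P: "is_law d P" and marg: "\<forall>i<d. marg_cdf P i = F i"
  shows "S_F d F (copula_of d P) = copula_of d (perm_mix d P)"
proof -
  let ?Q = "SOME Q. is_law d Q \<and> (\<forall>i<d. marg_cdf Q i = F i) \<and> copula_of d Q = copula_of d P"
  have Q: "is_law d ?Q \<and> (\<forall>i<d. marg_cdf ?Q i = F i) \<and> copula_of d ?Q = copula_of d P"
    by (rule someI[of _ P]) (use P marg in simp)
  then have "?Q = P"
    by (intro law_eqI_marg_cdf_copula) (use P marg in auto)
  then show ?thesis unfolding S_F_def by simp
qed

theorem mainTheorem7:
  fixes d :: nat and F :: "nat \<Rightarrow> real \<Rightarrow> real"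
  assumes "Fclass d F"
  shows "inj_on (S_F d F) (COS d F) \<and> bij_betw (S_F d F) (COS d F) (S_F d F ` COS d F)"
proof -
  have "inj_on (S_F d F) (COS d F)"
  proof (rule inj_onI)
    fix C1 C2 assume "C1 \<in> COS d F" "C2 \<in> COS d F" and S_eq: "S_F d F C1 = S_F d F C2"
    then obtain P1 P2 where P1: "P1 \<in> LOS d F" "C1 = copula_of d P1"
      and P2: "P2 \<in> LOS d F" "C2 = copula_of d P2"
      unfolding COS_def by blast
    then have laws: "is_law d P1" "is_law d P2"
      and sorted: "AE y in P1. sorted_vec d y" "AE y in P2. sorted_vec d y"
      and marg: "\<forall>i<d. marg_cdf P1 i = F i" "\<forall>i<d. marg_cdf P2 i = F i"
      unfolding LOS_def by auto
    have copula: "copula_of d (perm_mix d P1) = copula_of d (perm_mix d P2)"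
      using S_eq S_F_copula_of[OF laws(1) marg(1)] S_F_copula_of[OF laws(2) marg(2)] P1(2) P2(2) by simp
    have "marg_cdf (perm_mix d P1) i = marg_cdf (perm_mix d P2) i" if "i < d" for i
      using marg_cdf_perm_mix_cong[OF laws] marg that by simp
    then have "perm_mix d P1 = perm_mix d P2"
      by (rule law_eqI_marg_cdf_copula[OF is_law_perm_mix[OF laws(1)] is_law_perm_mix[OF laws(2)] _ copula])
    then have "P1 = P2"
      by (rule law_eq_if_perm_mix_eq[OF laws(1) sorted(1) laws(2) sorted(2)])
    then show "C1 = C2" using P1(2) P2(2) by simp
  qed
  then show ?thesis using inj_on_imp_bij_betw by blast
qed

end
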